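(* Let $(\Omega,\mathcal A,\mu,\tau)$ be an ergodic probability-preserving dynamical system and $\omega\mapsto C_\omega=\begin{pmatrix}a_\omega&b_\omega\\ c_\omega&d_\omega\end{pmatrix}\in U(2)$ a measurable map with $a_\omega\neq0$ for $\mu$-a.e. $\omega$ and $\int_\Omega\log\frac{1}{|a_\omega|}\,d\mu(\omega)<\infty$. For $z\in\mathbb T=\{z\in\mathbb C:|z|=1\}$ let $$T(\omega,z)=\frac1{a_\omega}\begin{pmatrix}\frac{\det C_\omega}{z} & c_\omega\\ -b_\omega & z\end{pmatrix},\qquad T_n(\omega,z)=T(\tau^{n-1}\omega,z)\cdots T(\tau\omega,z)T(\omega,z),$$ and let $\gamma(z)=\lim_{n\to\infty}\frac1n\int_\Omega\log\|T_n(\omega,z)\|\,d\mu(\omega)$ be the Lyapunov exponent. Then $$\int_{\mathbb T}\gamma(z)\,dz=\int_\Omega\log\frac1{|a_\omega|}\,d\mu(\omega),$$ where $dz$ denotes normalized Lebesgue (arc-length) measure on $\mathbb T$.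
   Context: $T(\omega,z)$ is the transfer matrix of the shift-coin quantum walk $W_\omega=C_\omega S$ on $\ell^2(\mathbb Z)\otimes\mathbb C^2$ with coin $C_\omega$ at site $x$ given by $C_{\tau^x\omega}$. The limit defining $\gamma$ exists by Kingman's subadditive ergodic theorem. $\|\cdot\|$ is the operator norm. *)

theory Defs
  imports "HOL-Analysis.Analysis" "HOL-Probability.Probability"
begin

definition measure_preserving_map :: "'a measure \<Rightarrow> ('a \<Rightarrow> 'a) \<Rightarrow> bool" where
  "measure_preserving_map M \<tau> \<longleftrightarrow> \<tau> \<in> M \<rightarrow>\<^sub>M M \<and> distr M M \<tau> = M"

definition ergodic_system :: "'a measure \<Rightarrow> ('a \<Rightarrow> 'a) \<Rightarrow> bool" where
  "ergodic_system M \<tau> \<longleftrightarrow> prob_space M \<and> measure_preserving_map M \<tau> \<and>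
     (\<forall>A\<in>sets M. \<tau> -` A \<inter> space M = A \<longrightarrow> measure M A = 0 \<or> measure M A = 1)"

definition cadjoint :: "complex^'n^'m \<Rightarrow> complex^'m^'n" where
  "cadjoint A = (\<chi> i j. cnj (A $ j $ i))"

definition unitary2 :: "complex^2^2 \<Rightarrow> bool" where
  "unitary2 U \<longleftrightarrow> U ** cadjoint U = mat 1 \<and> cadjoint U ** U = mat 1"

definition ca :: "complex^2^2 \<Rightarrow> complex" where "ca U = U $ 1 $ 1"
definition cb :: "complex^2^2 \<Rightarrow> complex" where "cb U = U $ 1 $ 2"
definition cc :: "complex^2^2 \<Rightarrow> complex" where "cc U = U $ 2 $ 1"
definition cd :: "complex^2^2 \<Rightarrow> complex" where "cd U = U $ 2 $ 2"

definition transfer :: "('a \<Rightarrow> complex^2^2) \<Rightarrow> 'a \<Rightarrow> complex \<Rightarrow> complex^2^2" where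
  "transfer C \<omega> z = (\<chi> i j.
     (if i = 1 then (if j = 1 then det (C \<omega>) / z else cc (C \<omega>))
      else (if j = 1 then - cb (C \<omega>) else z)) / ca (C \<omega>))"

fun transfer_n :: "('a \<Rightarrow> complex^2^2) \<Rightarrow> ('a \<Rightarrow> 'a) \<Rightarrow> nat \<Rightarrow> 'a \<Rightarrow> complex \<Rightarrow> complex^2^2" where
  "transfer_n C \<tau> 0 \<omega> z = mat 1"
| "transfer_n C \<tau> (Suc n) \<omega> z = transfer C ((\<tau> ^^ n) \<omega>) z ** transfer_n C \<tau> n \<omega> z"

definition opnorm :: "complex^2^2 \<Rightarrow> real" where
  "opnorm A = onorm (\<lambda>x. A *v x)"

definition lyapunov :: "'a measure \<Rightarrow> ('a \<Rightarrow> 'a) \<Rightarrow> ('a \<Rightarrow> complex^2^2) \<Rightarrow> complex \<Rightarrow> real" where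
  "lyapunov M \<tau> C z = lim (\<lambda>n. (1 / real n) * (\<integral>\<omega>. ln (opnorm (transfer_n C \<tau> n \<omega> z)) \<partial>M))"

end

theory Submission
  imports Defs "HOL-Complex_Analysis.Cauchy_Integral_Formula"
begin

text \<open>Each transfer matrix preserves the indefinite form \<open>diag(1,-1)\<close>, i.e. lies in \<open>U(1,1)\<close>,
  so \<open>\<parallel>T\<^sub>n(\<omega>,z)\<parallel>\<close> agrees with the modulus of its (1,1) entry up to a factor 4. That entry
  is \<open>q\<^sub>n(z) / (z\<^sup>n a(\<omega>) a(\<tau>\<omega>) \<dots> a(\<tau>\<^sup>n\<^sup>-\<^sup>1\<omega>))\<close>, where \<open>q\<^sub>n\<close> is a polynomial with
  \<open>|q\<^sub>n(0)| = 1\<close> and without zeros in the closed unit disc (the cone \<open>|v\<^sub>2| < |v\<^sub>1|\<close> is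
  invariant). By Gauss' mean value theorem \<open>ln |q\<^sub>n|\<close> averages to 0 over the circle, so the
  circle average of \<open>ln \<parallel>T\<^sub>n\<parallel>\<close> lies within \<open>ln 4\<close> of the Birkhoff sum of \<open>ln (1/|a|)\<close>.
  Integrating over \<open>\<Omega>\<close> (Fubini, invariance of \<open>\<mu>\<close>), dividing by \<open>n\<close> and letting
  \<open>n \<rightarrow> \<infinity>\<close> (Fekete's lemma for the limit, dominated convergence in \<open>z\<close>) gives the formula.\<close>

section \<open>Unitary and pseudo-unitary 2x2 matrices\<close>

lemma matrix2_eq_iff:
  "(A::'a^2^2) = B \<longleftrightarrow> A$1$1 = B$1$1 \<and> A$1$2 = B$1$2 \<and> A$2$1 = B$2$1 \<and> A$2$2 = B$2$2"
  by (simp add: vec_eq_iff forall_2)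

lemma matrix2_mult_nth: "(A ** B) $ i $ j = A $ i $ 1 * B $ 1 $ j + A $ i $ 2 * B $ 2 $ j"
  for A B :: "'a::semiring_1^2^2"
  by (simp add: matrix_matrix_mult_def sum_2)

lemma matrix2_vector_mult_nth: "(A *v x) $ i = A $ i $ 1 * x $ 1 + A $ i $ 2 * x $ 2"
  for A :: "'a::semiring_1^2^2"
  by (simp add: matrix_vector_mult_def sum_2)

lemma cadjoint_matrix_mult: "cadjoint (A ** B) = cadjoint B ** cadjoint A"
  for A :: "complex^'n^'m" and B :: "complex^'k^'n"
  by (simp add: cadjoint_def matrix_matrix_mult_def vec_eq_iff mult.commute)

lemma norm_eq_1_iff_mult_cnj: "cmod x = 1 \<longleftrightarrow> x * cnj x = 1"
proof -
  have "x * cnj x = 1 \<longleftrightarrow> cmod x ^ 2 = 1"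
    by (simp only: complex_norm_square[symmetric] of_real_eq_1_iff)
  also have "\<dots> \<longleftrightarrow> cmod x = 1" using norm_ge_zero[of x] unfolding power2_eq_1_iff by linarith
  finally show ?thesis ..
qed

lemma unitary2_entries:
  assumes "unitary2 U"
  defines "a \<equiv> ca U" and "b \<equiv> cb U" and "c \<equiv> cc U" and "d \<equiv> cd U" and "D \<equiv> det U"
  shows "a * cnj a + b * cnj b = 1" "c = - D * cnj b" "d = D * cnj a" "D * cnj D = 1"
proof -
  have "U ** cadjoint U = mat 1" "cadjoint U ** U = mat 1"
    using assms unfolding unitary2_def by auto
  then have "(U ** cadjoint U) $ 1 $ 1 = 1" "(U ** cadjoint U) $ 2 $ 2 = 1"
    "(U ** cadjoint U) $ 1 $ 2 = 0" "(cadjoint U ** U) $ 1 $ 1 = 1"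
    by (simp_all add: mat_def)
  then have h: "a * cnj a + b * cnj b = 1" "c * cnj c + d * cnj d = 1" "a * cnj c + b * cnj d = 0"
    "cnj a * a + cnj c * c = 1"
    unfolding matrix2_mult_nth cadjoint_def a_def b_def c_def d_def ca_def cb_def cc_def cd_def
    by simp_all
  have h3: "cnj a * c + cnj b * d = 0" using arg_cong[OF h(3), of cnj] by simp
  have D: "D = a * d - b * c"
    unfolding D_def a_def b_def c_def d_def ca_def cb_def cc_def cd_def by (simp add: det_2)
  show "a * cnj a + b * cnj b = 1" by (rule h(1))
  show c: "c = - D * cnj b" unfolding D using h(1) h3 by algebra
  show d: "d = D * cnj a" unfolding D using h(1,4) h3 by algebra
  have "cnj c = - cnj D * b" "cnj d = cnj D * a" using c d by simp_all
  then show "D * cnj D = 1" using h(1,2) c d by algebra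
qed

lemma unitary2_norm_det: "unitary2 U \<Longrightarrow> cmod (det U) = 1"
  using unitary2_entries(4) norm_eq_1_iff_mult_cnj by blast

lemma unitary2_norm_ca_cb:
  assumes "unitary2 U"
  shows "cmod (ca U) ^ 2 + cmod (cb U) ^ 2 = 1"
proof -
  have "complex_of_real (cmod (ca U) ^ 2 + cmod (cb U) ^ 2) = 1"
    using unitary2_entries(1)[OF assms] by (simp only: of_real_add complex_norm_square)
  then show ?thesis by (simp only: of_real_eq_1_iff)
qed

lemma unitary2_norm_ca_le_1:
  assumes "unitary2 U"
  shows "cmod (ca U) \<le> 1"
proof -
  have "cmod (ca U) ^ 2 \<le> 1"
    using unitary2_norm_ca_cb[OF assms] zero_le_power2[of "cmod (cb U)"] by linarith
  then show ?thesis by (simp add: power_le_one_iff)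
qed

definition signature_matrix :: "complex^2^2" where
  "signature_matrix = (\<chi> i j. if i = j then (if i = 1 then 1 else -1) else 0)"

definition pseudo_unitary :: "complex^2^2 \<Rightarrow> bool" where
  "pseudo_unitary M \<longleftrightarrow> cadjoint M ** signature_matrix ** M = signature_matrix"

lemma pseudo_unitary_mat_1: "pseudo_unitary (mat 1)"
  by (simp add: pseudo_unitary_def matrix2_eq_iff matrix2_mult_nth cadjoint_def
      signature_matrix_def mat_def)

lemma pseudo_unitary_mult:
  assumes "pseudo_unitary A" "pseudo_unitary B"
  shows "pseudo_unitary (A ** B)"
proof -
  have "cadjoint (A ** B) ** signature_matrix ** (A ** B)
      = cadjoint B ** (cadjoint A ** signature_matrix ** A) ** B"
    by (simp add: cadjoint_matrix_mult matrix_mul_assoc)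
  with assms show ?thesis by (simp add: pseudo_unitary_def)
qed

lemma pseudo_unitary_entries:
  assumes "pseudo_unitary M"
  shows "cmod (M$1$1) ^ 2 - cmod (M$2$1) ^ 2 = 1" "cmod (M$2$2) ^ 2 - cmod (M$1$2) ^ 2 = 1"
    "cnj (M$1$1) * M$1$2 = cnj (M$2$1) * M$2$2"
proof -
  have "(cadjoint M ** signature_matrix ** M) $ 1 $ 1 = 1"
    "(cadjoint M ** signature_matrix ** M) $ 2 $ 2 = -1"
    "(cadjoint M ** signature_matrix ** M) $ 1 $ 2 = 0"
    using assms by (simp_all add: pseudo_unitary_def signature_matrix_def)
  then have e: "cnj (M$1$1) * M$1$1 - cnj (M$2$1) * M$2$1 = 1"
    "cnj (M$2$2) * M$2$2 - cnj (M$1$2) * M$1$2 = 1"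
    "cnj (M$1$1) * M$1$2 - cnj (M$2$1) * M$2$2 = 0"
    by (simp_all add: matrix2_mult_nth cadjoint_def signature_matrix_def algebra_simps)
  have sq: "complex_of_real (cmod x ^ 2) = cnj x * x" for x
    by (metis complex_norm_square mult.commute)
  have "complex_of_real (cmod (M$1$1) ^ 2 - cmod (M$2$1) ^ 2) = 1"
    "complex_of_real (cmod (M$2$2) ^ 2 - cmod (M$1$2) ^ 2) = 1"
    using e(1,2) by (simp_all only: of_real_diff sq)
  then show "cmod (M$1$1) ^ 2 - cmod (M$2$1) ^ 2 = 1" "cmod (M$2$2) ^ 2 - cmod (M$1$2) ^ 2 = 1"
    by (simp_all only: of_real_eq_1_iff)
  show "cnj (M$1$1) * M$1$2 = cnj (M$2$1) * M$2$2" using e(3) by simp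
qed

lemma pseudo_unitary_norm_entries:
  assumes "pseudo_unitary M"
  shows "cmod (M$1$2) = cmod (M$2$1)" "cmod (M$2$2) = cmod (M$1$1)"
    "cmod (M$2$1) \<le> cmod (M$1$1)" "1 \<le> cmod (M$1$1)"
proof -
  note e = pseudo_unitary_entries[OF assms]
  define p q r s where "p = cmod (M$1$1)" "q = cmod (M$1$2)" "r = cmod (M$2$1)" "s = cmod (M$2$2)"
  have pos: "p \<ge> 0" "q \<ge> 0" "r \<ge> 0" "s \<ge> 0" by (simp_all add: p_q_r_s_def)
  have pr: "p^2 = 1 + r^2" and sq: "s^2 = 1 + q^2" using e(1,2) by (simp_all add: p_q_r_s_def)
  have "p * q = r * s" using arg_cong[OF e(3), of cmod] by (simp add: p_q_r_s_def norm_mult)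
  then have "p^2 * q^2 = r^2 * s^2" by (metis power_mult_distrib)
  then have "(1 + r^2) * q^2 = r^2 * (1 + q^2)" by (simp only: pr sq)
  then have "q^2 = r^2" by (simp add: algebra_simps)
  then have qr: "q = r" using pos by (simp add: power2_eq_iff_nonneg)
  then have "s = p" using pr sq pos power2_eq_iff_nonneg[of s p] by simp
  with qr show "cmod (M$1$2) = cmod (M$2$1)" "cmod (M$2$2) = cmod (M$1$1)"
    by (simp_all add: p_q_r_s_def)
  have "r^2 \<le> p^2" "1^2 \<le> p^2" using pr by simp_all
  then have "r \<le> p" "1 \<le> p" using power2_le_imp_le pos(1) by blast+
  then show "cmod (M$2$1) \<le> cmod (M$1$1)" "1 \<le> cmod (M$1$1)" by (simp_all add: p_q_r_s_def)
qed

lemma opnorm_mat_1: "opnorm (mat 1) = 1"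
proof -
  have "(*v) (mat 1) = (\<lambda>x::complex^2. x)" by (simp add: matrix_vector_mul_lid fun_eq_iff)
  then show ?thesis unfolding opnorm_def by (simp add: onorm_id)
qed

lemma opnorm_matrix_mult_le: "opnorm (A ** B) \<le> opnorm A * opnorm B"
proof -
  have "(\<lambda>x. (A ** B) *v x) = (\<lambda>x. A *v x) \<circ> (\<lambda>x. B *v x)"
    by (auto simp: matrix_vector_mul_assoc)
  then show ?thesis unfolding opnorm_def by (metis onorm_compose matrix_vector_mul_bounded_linear)
qed

lemma opnorm_triangle: "opnorm (A + B) \<le> opnorm A + opnorm B"
  unfolding opnorm_def matrix_vector_mult_add_rdistrib
  by (intro onorm_triangle matrix_vector_mul_bounded_linear)

lemma norm_nth_nth_le_opnorm: "cmod (A $ i $ j) \<le> opnorm A"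
proof -
  have "cmod (A $ i $ j) = cmod ((A *v axis j 1) $ i)"
    by (simp add: matrix_vector_mult_def axis_def if_distrib cong: if_cong)
  also have "\<dots> \<le> norm (A *v axis j 1)" by (rule Finite_Cartesian_Product.norm_nth_le)
  also have "\<dots> \<le> opnorm A * norm (axis j (1::complex))"
    unfolding opnorm_def by (rule onorm) simp
  also have "norm (axis j (1::complex)) = 1" by (simp add: norm_eq_sqrt_inner inner_axis_axis)
  finally show ?thesis by simp
qed

lemma opnorm_le_sum_norm_nth:
  "opnorm A \<le> cmod (A$1$1) + cmod (A$1$2) + cmod (A$2$1) + cmod (A$2$2)"
  unfolding opnorm_def
proof (rule onorm_le)
  fix x :: "complex^2"
  have "norm (A *v x) \<le> cmod ((A *v x)$1) + cmod ((A *v x)$2)"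
    using L2_set_le_sum[of UNIV "\<lambda>i. norm ((A *v x) $ i)"] by (simp add: norm_vec_def sum_2)
  also have "\<dots> \<le> (cmod (A$1$1) * cmod (x$1) + cmod (A$1$2) * cmod (x$2))
      + (cmod (A$2$1) * cmod (x$1) + cmod (A$2$2) * cmod (x$2))"
    unfolding matrix2_vector_mult_nth
    by (intro add_mono order_trans[OF norm_triangle_ineq]) (simp_all add: norm_mult)
  also have "\<dots> \<le> (cmod (A$1$1) * norm x + cmod (A$1$2) * norm x)
      + (cmod (A$2$1) * norm x + cmod (A$2$2) * norm x)"
    by (intro add_mono mult_left_mono Finite_Cartesian_Product.norm_nth_le norm_ge_zero)
  finally show "norm (A *v x) \<le> (cmod (A$1$1) + cmod (A$1$2) + cmod (A$2$1) + cmod (A$2$2)) * norm x"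
    by (simp add: algebra_simps)
qed

lemma norm_nth_nth_le_norm: "cmod (A $ i $ j) \<le> norm (A::complex^2^2)"
  by (meson Finite_Cartesian_Product.norm_nth_le order_trans)

lemma continuous_on_opnorm: "continuous_on S opnorm"
proof (rule lipschitz_on_continuous_on)
  have le_norm: "opnorm X \<le> 4 * norm X" for X :: "complex^2^2"
    using opnorm_le_sum_norm_nth[of X] norm_nth_nth_le_norm[of X 1 1] norm_nth_nth_le_norm[of X 1 2]
      norm_nth_nth_le_norm[of X 2 1] norm_nth_nth_le_norm[of X 2 2] by linarith
  show "4-lipschitz_on S opnorm"
  proof (rule lipschitz_onI)
    fix A B :: "complex^2^2"
    have "opnorm A \<le> opnorm B + opnorm (A - B)" "opnorm B \<le> opnorm A + opnorm (B - A)"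
      using opnorm_triangle[of B "A - B"] opnorm_triangle[of A "B - A"] by simp_all
    then have "\<bar>opnorm A - opnorm B\<bar> \<le> 4 * norm (A - B)"
      using le_norm[of "A - B"] le_norm[of "B - A"] norm_minus_commute[of A B] by linarith
    then show "dist (opnorm A) (opnorm B) \<le> 4 * dist A B"
      by (simp only: dist_real_def dist_norm)
  qed simp
qed

lemma pseudo_unitary_opnorm_le: "pseudo_unitary M \<Longrightarrow> opnorm M \<le> 4 * cmod (M$1$1)"
  using opnorm_le_sum_norm_nth[of M] pseudo_unitary_norm_entries[of M] by linarith

lemma pseudo_unitary_opnorm_ge_1: "pseudo_unitary M \<Longrightarrow> 1 \<le> opnorm M"
  using pseudo_unitary_norm_entries(4) norm_nth_nth_le_opnorm order_trans by blast

lemma transfer_nth: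
  "transfer C \<omega> z $ 1 $ 1 = det (C \<omega>) / z / ca (C \<omega>)"
  "transfer C \<omega> z $ 1 $ 2 = cc (C \<omega>) / ca (C \<omega>)"
  "transfer C \<omega> z $ 2 $ 1 = - cb (C \<omega>) / ca (C \<omega>)"
  "transfer C \<omega> z $ 2 $ 2 = z / ca (C \<omega>)"
  by (simp_all add: transfer_def)

lemma transfer_pseudo_unitary:
  assumes U: "unitary2 (C \<omega>)" and a: "ca (C \<omega>) \<noteq> 0" and z: "cmod z = 1"
  shows "pseudo_unitary (transfer C \<omega> z)"
proof -
  define A B D where "A = ca (C \<omega>)" "B = cb (C \<omega>)" "D = det (C \<omega>)"
  note unitary = unitary2_entries[OF U, folded A_B_D_def]
  have cD: "cnj D * D = 1" using unitary(4) by (simp add: mult.commute)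
  have cz: "cnj z * z = 1" using z by (simp add: norm_eq_1_iff_mult_cnj mult.commute)
  have cA: "cnj A * A = 1 - B * cnj B" using unitary(1) by (simp add: algebra_simps)
  have "z \<noteq> 0" "A \<noteq> 0" "cnj A * A \<noteq> 0" using z a by (auto simp: A_B_D_def)
  have e11: "cnj (D / z / A) * (D / z / A) - cnj (- B / A) * (- B / A) = 1"
  proof -
    have "cnj (D / z / A) * (D / z / A) = (cnj D * D) / ((cnj z * z) * (cnj A * A))" by simp
    also have "\<dots> = 1 / (cnj A * A)" by (simp only: cD cz) simp
    finally have 1: "cnj (D / z / A) * (D / z / A) = 1 / (cnj A * A)" .
    have 2: "cnj (- B / A) * (- B / A) = (B * cnj B) / (cnj A * A)" by (simp add: algebra_simps)
    show ?thesis unfolding 1 2 using \<open>cnj A * A \<noteq> 0\<close> cA by (simp add: divide_simps)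
  qed
  have e22: "cnj (cc (C \<omega>) / A) * (cc (C \<omega>) / A) - cnj (z / A) * (z / A) = -1"
  proof -
    have 1: "cnj (cc (C \<omega>) / A) * (cc (C \<omega>) / A) = (cnj D * D) * (B * cnj B) / (cnj A * A)"
      by (simp add: unitary(2) algebra_simps)
    have 2: "cnj (z / A) * (z / A) = (cnj z * z) / (cnj A * A)" by simp
    show ?thesis unfolding 1 2 cD cz using \<open>cnj A * A \<noteq> 0\<close> cA by (simp add: divide_simps)
  qed
  have e12: "cnj (D / z / A) * (cc (C \<omega>) / A) - cnj (- B / A) * (z / A) = 0"
  proof -
    have 1: "cnj (D / z / A) * (cc (C \<omega>) / A) = - (cnj D * D) * cnj B / (cnj z * cnj A * A)"
      by (simp add: unitary(2) algebra_simps)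
    have 2: "cnj z = 1 / z" using cz \<open>z \<noteq> 0\<close> by (simp add: field_simps)
    have 3: "cnj (- B / A) * (z / A) = - cnj B * z / (cnj A * A)" by simp
    show ?thesis unfolding 1 3 cD 2 using \<open>A \<noteq> 0\<close> \<open>z \<noteq> 0\<close> by (simp add: divide_simps)
  qed
  have e21: "cnj (cc (C \<omega>) / A) * (D / z / A) - cnj (z / A) * (- B / A) = 0"
    using arg_cong[OF e12, of cnj] by (simp add: algebra_simps)
  have "cadjoint (transfer C \<omega> z) ** signature_matrix ** transfer C \<omega> z = signature_matrix"
    unfolding matrix2_eq_iff matrix2_mult_nth
    by (simp add: cadjoint_def signature_matrix_def transfer_nth flip: A_B_D_def)
       (use e11 e12 e21 e22 in \<open>simp_all add: algebra_simps\<close>)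
  then show ?thesis by (simp add: pseudo_unitary_def)
qed

lemma transfer_n_add:
  "transfer_n C \<tau> (m + n) \<omega> z = transfer_n C \<tau> m ((\<tau> ^^ n) \<omega>) z ** transfer_n C \<tau> n \<omega> z"
  by (induction m) (simp_all add: matrix_mul_lid matrix_mul_assoc funpow_add)

definition nondegenerate_upto :: "('a \<Rightarrow> complex^2^2) \<Rightarrow> ('a \<Rightarrow> 'a) \<Rightarrow> nat \<Rightarrow> 'a \<Rightarrow> bool" where
  "nondegenerate_upto C \<tau> n \<omega> \<longleftrightarrow> (\<forall>k<n. unitary2 (C ((\<tau> ^^ k) \<omega>)) \<and> ca (C ((\<tau> ^^ k) \<omega>)) \<noteq> 0)"

lemma nondegenerate_upto_add:
  assumes "nondegenerate_upto C \<tau> (m + n) \<omega>"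
  shows "nondegenerate_upto C \<tau> m ((\<tau> ^^ n) \<omega>)" "nondegenerate_upto C \<tau> n \<omega>"
proof -
  have "(\<tau> ^^ k) ((\<tau> ^^ n) \<omega>) = (\<tau> ^^ (k + n)) \<omega>" for k by (simp add: funpow_add)
  with assms show "nondegenerate_upto C \<tau> m ((\<tau> ^^ n) \<omega>)" "nondegenerate_upto C \<tau> n \<omega>"
    unfolding nondegenerate_upto_def by auto
qed

lemma transfer_n_pseudo_unitary:
  assumes "nondegenerate_upto C \<tau> n \<omega>" and "cmod z = 1"
  shows "pseudo_unitary (transfer_n C \<tau> n \<omega> z)"
  using assms(1)
proof (induction n)
  case 0
  then show ?case by (simp add: pseudo_unitary_mat_1)
next
  case (Suc n)
  then show ?case
    using transfer_pseudo_unitary[of C "(\<tau> ^^ n) \<omega>" z] assms(2)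
    by (simp add: pseudo_unitary_mult nondegenerate_upto_def)
qed

section \<open>The first column of the transfer matrices\<close>

text \<open>\<open>z * ca U\<close> times the one-step transfer matrix: its entries are polynomials in \<open>z\<close>.\<close>

definition transfer_numerator :: "complex^2^2 \<Rightarrow> complex \<Rightarrow> complex^2^2" where
  "transfer_numerator U z = (\<chi> i j. if i = 1 then (if j = 1 then det U else cc U * z)
                                     else (if j = 1 then - cb U * z else z * z))"

fun numerator_column :: "('a \<Rightarrow> complex^2^2) \<Rightarrow> ('a \<Rightarrow> 'a) \<Rightarrow> nat \<Rightarrow> 'a \<Rightarrow> complex \<Rightarrow> complex^2" where
  "numerator_column C \<tau> 0 \<omega> z = axis 1 1"
| "numerator_column C \<tau> (Suc n) \<omega> z =
     transfer_numerator (C ((\<tau> ^^ n) \<omega>)) z *v numerator_column C \<tau> n \<omega> z"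

lemma numerator_column_Suc_nth:
  "numerator_column C \<tau> (Suc n) \<omega> z $ 1 =
     det (C ((\<tau> ^^ n) \<omega>)) * numerator_column C \<tau> n \<omega> z $ 1
     + cc (C ((\<tau> ^^ n) \<omega>)) * z * numerator_column C \<tau> n \<omega> z $ 2"
  "numerator_column C \<tau> (Suc n) \<omega> z $ 2 =
     - cb (C ((\<tau> ^^ n) \<omega>)) * z * numerator_column C \<tau> n \<omega> z $ 1
     + z * z * numerator_column C \<tau> n \<omega> z $ 2"
  by (simp_all add: matrix2_vector_mult_nth transfer_numerator_def)

declare numerator_column.simps(2) [simp del]

lemma transfer_n_first_column:
  assumes "z \<noteq> 0"
  shows "transfer_n C \<tau> n \<omega> z $ i $ 1
    = numerator_column C \<tau> n \<omega> z $ i / (z ^ n * (\<Prod>k<n. ca (C ((\<tau> ^^ k) \<omega>))))"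
proof (induction n arbitrary: i)
  case 0
  then show ?case by (simp add: mat_def axis_def)
next
  case (Suc n)
  define a where "a = ca (C ((\<tau> ^^ n) \<omega>))"
  define P where "P = z ^ n * (\<Prod>k<n. ca (C ((\<tau> ^^ k) \<omega>)))"
  have P_Suc: "z ^ Suc n * (\<Prod>k<Suc n. ca (C ((\<tau> ^^ k) \<omega>))) = P * z * a"
    by (simp add: P_def a_def algebra_simps)
  have "transfer_n C \<tau> (Suc n) \<omega> z $ i $ 1 =
     transfer C ((\<tau> ^^ n) \<omega>) z $ i $ 1 * (numerator_column C \<tau> n \<omega> z $ 1 / P)
     + transfer C ((\<tau> ^^ n) \<omega>) z $ i $ 2 * (numerator_column C \<tau> n \<omega> z $ 2 / P)"
    using Suc by (simp add: matrix2_mult_nth P_def)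
  also have "\<dots> = numerator_column C \<tau> (Suc n) \<omega> z $ i / (P * z * a)"
  proof (cases "a = 0 \<or> P = 0")
    case True
    then show ?thesis by (cases "i = 1") (auto simp: transfer_def a_def)
  next
    case False
    consider "i = 1" | "i = 2" using exhaust_2 by blast
    then show ?thesis
      by cases (use False assms in \<open>simp_all add: transfer_def numerator_column_Suc_nth
          field_simps flip: a_def\<close>)
  qed
  finally show ?case by (simp only: P_Suc)
qed

text \<open>The cone \<open>|v\<^sub>2| < |v\<^sub>1|\<close> is mapped into itself by the numerator
  for \<open>|z| \<le> 1\<close>; the inequality below is the computation behind it, with
  \<open>X = |v\<^sub>1|\<close>, \<open>Y = |v\<^sub>2|\<close>, \<open>r = |z|\<close>, \<open>\<beta> = |b|\<close>.\<close>

lemma cone_inequality: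
  fixes X Y r \<beta> R :: real
  assumes "0 \<le> Y" "Y < X" "0 \<le> r" "r \<le> 1" "0 \<le> \<beta>" "\<beta>^2 < 1" "R \<le> \<beta> * r * X * Y"
  shows "r^2 * (\<beta>^2 * X^2 - 2 * R + r^2 * Y^2) < X^2 - 2 * R + \<beta>^2 * r^2 * Y^2"
proof -
  have "(1 - r^2) * R \<le> (1 - r^2) * (\<beta> * r * X * Y)"
    using assms by (intro mult_left_mono) (auto simp: power_le_one)
  then have "X^2 - 2 * R + \<beta>^2 * r^2 * Y^2 - r^2 * (\<beta>^2 * X^2 - 2 * R + r^2 * Y^2)
      \<ge> (1 - r^2) * (X - \<beta> * r * Y)^2 + r^2 * (1 - \<beta>^2) * (X^2 - r^2 * Y^2)"
    by (simp add: algebra_simps power2_eq_square)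
  moreover have "(1 - r^2) * (X - \<beta> * r * Y)^2 + r^2 * (1 - \<beta>^2) * (X^2 - r^2 * Y^2) > 0"
  proof (cases "r = 0")
    case True
    then show ?thesis using assms by simp
  next
    case False
    have "r^2 * Y^2 \<le> Y^2" using assms by (simp add: mult_left_le_one_le power_le_one)
    moreover have "Y^2 < X^2" using assms by (simp add: power_strict_mono)
    ultimately have "X^2 - r^2 * Y^2 > 0" by linarith
    moreover have "r^2 * (1 - \<beta>^2) > 0" using False assms by simp
    ultimately have "r^2 * (1 - \<beta>^2) * (X^2 - r^2 * Y^2) > 0" by simp
    moreover have "(1 - r^2) * (X - \<beta> * r * Y)^2 \<ge> 0" using assms by (simp add: power_le_one)
    ultimately show ?thesis by linarith
  qed
  ultimately show ?thesis by linarith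
qed

lemma transfer_numerator_cone:
  assumes U: "unitary2 U" and a: "ca U \<noteq> 0" and z: "cmod z \<le> 1"
    and v: "cmod (v$2) < cmod (v$1)"
  shows "cmod ((transfer_numerator U z *v v)$2) < cmod ((transfer_numerator U z *v v)$1)"
proof -
  define x y b D where "x = v$1" "y = v$2" "b = cb U" "D = det U"
  note unitary = unitary2_entries[OF U]
  have e1: "(transfer_numerator U z *v v)$1 = D * (x - cnj b * z * y)"
    by (simp add: matrix2_vector_mult_nth transfer_numerator_def unitary(2) x_y_b_D_def algebra_simps)
  have e2: "(transfer_numerator U z *v v)$2 = - z * (b * x - z * y)"
    by (simp add: matrix2_vector_mult_nth transfer_numerator_def x_y_b_D_def algebra_simps)
  define R where "R = Re (x * b * cnj z * cnj y)"
  have norm_diff: "cmod (u - w) ^ 2 = cmod u ^ 2 - 2 * Re (u * cnj w) + cmod w ^ 2" for u w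
    unfolding cmod_power2 by (simp add: power2_diff algebra_simps)
  have n1: "cmod (x - cnj b * z * y) ^ 2 = cmod x ^ 2 - 2 * R + cmod b ^ 2 * cmod z ^ 2 * cmod y ^ 2"
    unfolding norm_diff R_def by (simp add: norm_mult power_mult_distrib algebra_simps)
  have n2: "cmod (b * x - z * y) ^ 2 = cmod b ^ 2 * cmod x ^ 2 - 2 * R + cmod z ^ 2 * cmod y ^ 2"
    unfolding norm_diff R_def by (simp add: norm_mult power_mult_distrib algebra_simps)
  have "R \<le> cmod (x * b * cnj z * cnj y)" unfolding R_def by (rule complex_Re_le_cmod)
  then have Rb: "R \<le> cmod b * cmod z * cmod x * cmod y" by (simp add: norm_mult algebra_simps)
  have "0 < cmod (ca U) ^ 2" using a by simp
  then have "cmod b ^ 2 < 1" using unitary2_norm_ca_cb[OF U] unfolding x_y_b_D_def by linarith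
  then have "cmod z ^ 2 * (cmod b ^ 2 * cmod x ^ 2 - 2 * R + cmod z ^ 2 * cmod y ^ 2)
     < cmod x ^ 2 - 2 * R + cmod b ^ 2 * cmod z ^ 2 * cmod y ^ 2"
    by (intro cone_inequality) (use v z Rb in \<open>simp_all add: x_y_b_D_def\<close>)
  then have "(cmod z * cmod (b * x - z * y)) ^ 2 < cmod (x - cnj b * z * y) ^ 2"
    unfolding power_mult_distrib n1 n2 by (simp add: algebra_simps)
  then have "cmod z * cmod (b * x - z * y) < cmod (x - cnj b * z * y)"
    by (rule power_less_imp_less_base) simp
  then show ?thesis
    unfolding e1 e2 using unitary2_norm_det[OF U] by (simp add: norm_mult x_y_b_D_def)
qed

lemma numerator_column_cone:
  assumes "nondegenerate_upto C \<tau> n \<omega>" "cmod z \<le> 1"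
  shows "cmod (numerator_column C \<tau> n \<omega> z $ 2) < cmod (numerator_column C \<tau> n \<omega> z $ 1)"
  using assms(1)
proof (induction n)
  case 0
  then show ?case by (simp add: axis_def)
next
  case (Suc n)
  then have "nondegenerate_upto C \<tau> n \<omega>" by (simp add: nondegenerate_upto_def)
  with Suc show ?case
    using transfer_numerator_cone[OF _ _ assms(2)]
    by (simp add: nondegenerate_upto_def numerator_column.simps(2))
qed

lemma numerator_column_1_nonzero:
  assumes "nondegenerate_upto C \<tau> n \<omega>" "cmod z \<le> 1"
  shows "numerator_column C \<tau> n \<omega> z $ 1 \<noteq> 0"
  using numerator_column_cone[OF assms] by (metis norm_ge_zero norm_zero not_less)

lemma norm_numerator_column_1_at_0:
  "nondegenerate_upto C \<tau> n \<omega> \<Longrightarrow> cmod (numerator_column C \<tau> n \<omega> 0 $ 1) = 1"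
proof (induction n)
  case 0
  then show ?case by (simp add: axis_def)
next
  case (Suc n)
  then show ?case
    by (simp add: numerator_column_Suc_nth norm_mult unitary2_norm_det nondegenerate_upto_def)
qed

lemma holomorphic_numerator_column: "(\<lambda>z. numerator_column C \<tau> n \<omega> z $ i) holomorphic_on S"
proof (induction n arbitrary: i)
  case 0
  then show ?case by simp
next
  case (Suc n)
  have "i = 1 \<or> i = 2" using exhaust_2 by blast
  with Suc show ?case by (auto simp: numerator_column_Suc_nth intro!: holomorphic_intros)
qed

section \<open>Mean value of \<open>ln |f|\<close> on the unit circle\<close>

lemma holomorphic_circle_mean:
  fixes g :: "complex \<Rightarrow> complex"
  assumes "g holomorphic_on cball 0 1"
  shows "((\<lambda>t. g (cis t)) has_integral of_real (2 * pi) * g 0) {0..2*pi}"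
proof -
  have "((\<lambda>u. g u / (u - 0)) has_contour_integral 2 * of_real pi * \<i> * g 0) (circlepath 0 1)"
    using assms by (rule Cauchy_integral_circlepath_simple) simp
  then have "((\<lambda>t. \<i> * g (cis t)) has_integral \<i> * (2 * pi * g 0)) {0..2*pi}"
    by (simp add: circlepath_def has_contour_integral_part_circlepath_iff mult_ac)
  then show ?thesis by (simp add: has_integral_mult_right_iff)
qed

lemma open_superset_cball_obtains_ball:
  fixes S :: "'a::{real_normed_vector,heine_borel} set"
  assumes "open S" "cball 0 r \<subseteq> S" "0 \<le> r"
  obtains R where "R > r" "ball 0 R \<subseteq> S"
proof -
  obtain e where e: "e > 0" "(\<Union>x\<in>cball 0 r. ball x e) \<subseteq> S"
    using compact_subset_open_imp_ball_epsilon_subset[OF compact_cball assms(1,2)] .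
  have "z \<in> S" if "norm z < r + e" for z
  proof (cases "norm z \<le> r")
    case True
    then have "z \<in> cball 0 r" by simp
    then show ?thesis using e by (meson UN_subset_iff centre_in_ball subsetD)
  next
    case False
    then have "norm z > 0" using \<open>0 \<le> r\<close> by linarith
    define x where "x = (r / norm z) *\<^sub>R z"
    have "x - z = (r / norm z - 1) *\<^sub>R z" by (simp add: x_def scaleR_diff_left)
    moreover have "r / norm z < 1" using False by (simp add: divide_less_eq)
    ultimately have "dist x z = (1 - r / norm z) * norm z" by (simp add: dist_norm)
    also have "\<dots> = norm z - r" using \<open>norm z > 0\<close> by (simp add: field_simps)
    finally have "z \<in> ball x e" using that by simp
    moreover have "x \<in> cball 0 r" using \<open>norm z > 0\<close> \<open>0 \<le> r\<close> by (simp add: x_def)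
    ultimately show ?thesis using e(2) by blast
  qed
  with e(1) show ?thesis by (intro that[of "r + e"]) auto
qed

lemma set_integral_const_atLeastAtMost:
  fixes c :: real
  shows "set_integrable lborel {a..b} (\<lambda>_. c)"
    and "a \<le> b \<Longrightarrow> (LINT t:{a..b}|lborel. c) = (b - a) * c"
  by (simp_all add: borel_integrable_atLeastAtMost' set_integral_const)

text \<open>Gauss' mean value theorem for \<open>ln |f|\<close>: as \<open>f\<close> has no zeros on the closed disc,
  \<open>ln |f|\<close> is the real part of a holomorphic logarithm of \<open>f\<close> on a slightly larger disc.\<close>

lemma circle_mean_ln_norm:
  fixes f :: "complex \<Rightarrow> complex"
  assumes holo: "f holomorphic_on UNIV" and nz: "\<And>z. cmod z \<le> 1 \<Longrightarrow> f z \<noteq> 0"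
  shows "set_integrable lborel {0..2*pi} (\<lambda>t. ln (cmod (f (cis t))))"
    and "(LINT t:{0..2*pi}|lborel. ln (cmod (f (cis t)))) = 2 * pi * ln (cmod (f 0))"
proof -
  have cont: "continuous_on UNIV f" using holo holomorphic_on_imp_continuous_on by blast
  have "open {z. f z \<noteq> 0}" using cont by (simp add: open_Collect_neq continuous_on_const)
  then obtain R where R: "R > 1" "ball 0 R \<subseteq> {z. f z \<noteq> 0}"
    using nz open_superset_cball_obtains_ball[of "{z. f z \<noteq> 0}" 1] by (auto simp: subset_iff)
  obtain g where g: "g holomorphic_on ball 0 R" "\<And>x. x \<in> ball 0 R \<Longrightarrow> exp (g x) = f x"
    by (rule holomorphic_logarithm_exists[of "ball 0 R" f 0])
       (use R holomorphic_on_subset[OF holo] in auto)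
  have Re_g: "Re (g x) = ln (cmod (f x))" if "x \<in> ball 0 R" for x
    using g(2)[OF that] by (metis norm_exp_eq_Re ln_exp)
  have "g holomorphic_on cball 0 1"
    by (rule holomorphic_on_subset[OF g(1)]) (use R(1) in \<open>auto simp: dist_norm\<close>)
  from has_integral_linear[OF holomorphic_circle_mean[OF this] bounded_linear_Re]
  have "((\<lambda>t. ln (cmod (f (cis t)))) has_integral 2 * pi * ln (cmod (f 0))) {0..2*pi}"
    using Re_g R(1) by (simp add: o_def)
  moreover have "continuous_on {0..2*pi} (\<lambda>t. ln (cmod (f (cis t))))"
    using nz by (intro continuous_intros continuous_on_compose2[OF cont]) auto
  then show integrable: "set_integrable lborel {0..2*pi} (\<lambda>t. ln (cmod (f (cis t))))"
    by (rule borel_integrable_atLeastAtMost')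
  ultimately show "(LINT t:{0..2*pi}|lborel. ln (cmod (f (cis t)))) = 2 * pi * ln (cmod (f 0))"
    using set_borel_integral_eq_integral(2)[OF integrable] integral_unique by metis
qed

lemma circle_mean_ln_numerator_column:
  assumes "nondegenerate_upto C \<tau> n \<omega>"
  shows "set_integrable lborel {0..2*pi} (\<lambda>t. ln (cmod (numerator_column C \<tau> n \<omega> (cis t) $ 1)))"
    and "(LINT t:{0..2*pi}|lborel. ln (cmod (numerator_column C \<tau> n \<omega> (cis t) $ 1))) = 0"
  using circle_mean_ln_norm[OF holomorphic_numerator_column numerator_column_1_nonzero[OF assms]]
    norm_numerator_column_1_at_0[OF assms]
  by simp_all

section \<open>Fekete's subadditive lemma\<close>

lemma subadditive_mult_add_le:
  fixes F :: "nat \<Rightarrow> real"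
  assumes "\<And>m n. F (m + n) \<le> F m + F n"
  shows "F (q * m + r) \<le> real q * F m + F r"
proof (induction q)
  case (Suc q)
  have "F (Suc q * m + r) \<le> F m + F (q * m + r)"
    using assms[of m "q * m + r"] by (simp add: add.assoc)
  with Suc show ?case by (simp add: algebra_simps)
qed simp

lemma fekete_subadditive:
  fixes F :: "nat \<Rightarrow> real"
  assumes sub: "\<And>m n. F (m + n) \<le> F m + F n" and nonneg: "\<And>n. 0 \<le> F n"
  shows "(\<lambda>n. F n / real n) \<longlonglongrightarrow> (INF n\<in>{1..}. F n / real n)"
proof (rule LIMSEQ_I)
  define L where "L = (INF n\<in>{1..}. F n / real n)"
  have bdd: "bdd_below ((\<lambda>n. F n / real n) ` {1..})" using nonneg by (intro bdd_belowI[of _ 0]) auto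
  have L_le: "L \<le> F n / real n" if "n \<ge> 1" for n
    unfolding L_def using bdd that by (intro cINF_lower) auto
  fix \<epsilon> :: real assume "0 < \<epsilon>"
  then obtain m where m: "m \<ge> 1" "F m / real m < L + \<epsilon>/2"
    unfolding L_def using cINF_less_iff[OF _ bdd, of "L + \<epsilon>/2"] by (auto simp: L_def)
  define B where "B = sum F {..<m}"
  have F_le_B: "F r \<le> B" if "r < m" for r
    unfolding B_def using that nonneg by (intro member_le_sum) auto
  obtain N :: nat where N: "real N > 2 * B / \<epsilon>" using reals_Archimedean2 by blast
  show "\<exists>N. \<forall>n\<ge>N. norm (F n / real n - L) < \<epsilon>"
  proof (intro exI[of _ "Suc N"] allI impI)
    fix n assume n: "n \<ge> Suc N"
    then have n_pos: "real n > 0" by simp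
    have "F n \<le> real (n div m) * F m + B"
      using subadditive_mult_add_le[OF sub, of "n div m" m "n mod m"] F_le_B[of "n mod m"] m(1)
      by simp
    also have "real (n div m) * F m \<le> real n / real m * F m"
      using nonneg m(1) of_nat_div_le_of_nat[of n m] by (intro mult_right_mono) auto
    finally have "F n / real n \<le> F m / real m + B / real n"
      using n_pos by (simp add: field_simps)
    moreover have "2 * B / \<epsilon> < real n" using N n by linarith
    then have "B / real n < \<epsilon> / 2" using \<open>0 < \<epsilon>\<close> n_pos by (simp add: field_simps)
    ultimately have "F n / real n - L < \<epsilon>" using m(2) by linarith
    then show "norm (F n / real n - L) < \<epsilon>" using L_le[of n] n by simp
  qed
qed

lemma borel_measurable_vec_lambda:
  fixes f :: "'a \<Rightarrow> 'n::finite \<Rightarrow> 'b::euclidean_space"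
  assumes "\<And>i. (\<lambda>x. f x i) \<in> borel_measurable M"
  shows "(\<lambda>x. \<chi> i. f x i) \<in> borel_measurable M"
  unfolding borel_measurable_euclidean_space[where 'c="'b^'n"]
  using assms by (auto simp: Basis_vec_def inner_axis)

lemma borel_measurable_vec_nth:
  fixes f :: "'a \<Rightarrow> 'b::real_normed_vector^'n"
  assumes "f \<in> borel_measurable M"
  shows "(\<lambda>x. f x $ i) \<in> borel_measurable M"
  by (rule borel_measurable_continuous_on[OF _ assms]) (intro continuous_intros)

lemma borel_measurable_matrix_mult:
  fixes f g :: "'a \<Rightarrow> complex^'n^'n"
  assumes "f \<in> borel_measurable M" "g \<in> borel_measurable M"
  shows "(\<lambda>x. f x ** g x) \<in> borel_measurable M"
  unfolding matrix_matrix_mult_def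
  by (intro borel_measurable_vec_lambda borel_measurable_sum borel_measurable_times
      borel_measurable_vec_nth assms)

lemma borel_measurable_cis [measurable]: "cis \<in> borel_measurable borel"
  by (intro borel_measurable_continuous_onI continuous_intros)

lemma measurable_funpow: "\<tau> \<in> M \<rightarrow>\<^sub>M M \<Longrightarrow> (\<tau> ^^ n) \<in> M \<rightarrow>\<^sub>M M"
  by (induction n) (auto simp: measurable_comp)

lemma borel_measurable_transfer:
  fixes C :: "'a \<Rightarrow> complex^2^2"
  assumes "C \<in> borel_measurable M" "g \<in> N \<rightarrow>\<^sub>M M" "h \<in> borel_measurable N"
  shows "(\<lambda>x. transfer C (g x) (h x)) \<in> borel_measurable N"
proof -
  have "(\<lambda>x. C (g x) $ i $ j) \<in> borel_measurable N" for i j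
    by (intro borel_measurable_vec_nth measurable_compose[OF assms(2,1)])
  then show ?thesis
    unfolding transfer_def det_2 ca_def cb_def cc_def
  proof (intro borel_measurable_vec_lambda)
    fix i j :: 2
    assume entries: "\<And>i j. (\<lambda>x. C (g x) $ i $ j) \<in> borel_measurable N"
    show "(\<lambda>x. (if i = 1 then if j = 1 then (C (g x) $ 1 $ 1 * C (g x) $ 2 $ 2
        - C (g x) $ 1 $ 2 * C (g x) $ 2 $ 1) / h x else C (g x) $ 2 $ 1
        else if j = 1 then - C (g x) $ 1 $ 2 else h x) / C (g x) $ 1 $ 1) \<in> borel_measurable N"
      by (cases "i = 1"; cases "j = 1")
         (auto intro!: borel_measurable_divide borel_measurable_diff borel_measurable_times
            borel_measurable_uminus entries assms(3))
  qed
qed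

lemma borel_measurable_ln_opnorm_transfer_n:
  fixes C :: "'a \<Rightarrow> complex^2^2"
  assumes "C \<in> borel_measurable M" "\<tau> \<in> M \<rightarrow>\<^sub>M M" "g \<in> N \<rightarrow>\<^sub>M M" "h \<in> borel_measurable N"
  shows "(\<lambda>x. ln (opnorm (transfer_n C \<tau> n (g x) (h x)))) \<in> borel_measurable N"
proof -
  have "(\<lambda>x. transfer_n C \<tau> n (g x) (h x)) \<in> borel_measurable N"
  proof (induction n)
    case (Suc n)
    have "(\<lambda>x. (\<tau> ^^ n) (g x)) \<in> N \<rightarrow>\<^sub>M M"
      using measurable_compose[OF assms(3) measurable_funpow[OF assms(2)]] .
    then show ?case using Suc
      by (auto intro!: borel_measurable_matrix_mult borel_measurable_transfer[OF assms(1) _ assms(4)])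
  qed simp
  then show ?thesis
    by (intro borel_measurable_ln borel_measurable_continuous_on[OF continuous_on_opnorm])
qed

lemma measure_preserving_map_funpow:
  assumes "measure_preserving_map M \<tau>"
  shows "measure_preserving_map M (\<tau> ^^ n)"
proof (induction n)
  case 0
  then show ?case by (simp add: measure_preserving_map_def distr_id2)
next
  case (Suc n)
  have \<tau>: "\<tau> \<in> M \<rightarrow>\<^sub>M M" "distr M M \<tau> = M" and \<tau>n: "(\<tau> ^^ n) \<in> M \<rightarrow>\<^sub>M M"
    using assms Suc by (auto simp: measure_preserving_map_def)
  have "distr M M (\<tau> ^^ Suc n) = distr M M (\<tau> \<circ> (\<tau> ^^ n))" by simp
  also have "\<dots> = distr (distr M M (\<tau> ^^ n)) M \<tau>" by (rule distr_distr[OF \<tau>(1) \<tau>n, symmetric])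
  also have "\<dots> = M" using Suc \<tau>(2) by (simp add: measure_preserving_map_def)
  finally show ?case using \<tau>(1) \<tau>n by (auto simp: measure_preserving_map_def simp del: funpow.simps)
qed

context
  fixes M :: "'a measure" and \<tau> :: "'a \<Rightarrow> 'a"
  assumes measure_preserving: "measure_preserving_map M \<tau>"
begin

lemma measurable_measure_preserving: "\<tau> \<in> M \<rightarrow>\<^sub>M M"
  and distr_measure_preserving: "distr M M \<tau> = M"
  using measure_preserving by (simp_all add: measure_preserving_map_def)

lemma integrable_comp_measure_preserving:
  fixes f :: "'a \<Rightarrow> real"
  shows "integrable M f \<Longrightarrow> integrable M (\<lambda>\<omega>. f (\<tau> \<omega>))"
  using integrable_distr_eq[OF measurable_measure_preserving, of f] distr_measure_preserving
  by (simp add: borel_measurable_integrable)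

lemma integral_comp_measure_preserving:
  fixes f :: "'a \<Rightarrow> real"
  shows "f \<in> borel_measurable M \<Longrightarrow> (\<integral>\<omega>. f (\<tau> \<omega>) \<partial>M) = (\<integral>\<omega>. f \<omega> \<partial>M)"
  using integral_distr[OF measurable_measure_preserving, of f] distr_measure_preserving by simp

lemma AE_comp_measure_preserving:
  assumes "AE \<omega> in M. P \<omega>"
  shows "AE \<omega> in M. P (\<tau> \<omega>)"
proof -
  have "AE \<omega> in distr M M \<tau>. P \<omega>" unfolding distr_measure_preserving by (rule assms)
  then show ?thesis by (rule AE_distrD[OF measurable_measure_preserving])
qed

end

section \<open>Averaging over the system and over the circle\<close>

locale unitary_cocycle = prob_space M for M :: "'a measure" +
  fixes \<tau> :: "'a \<Rightarrow> 'a" and C :: "'a \<Rightarrow> complex^2^2"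
  assumes measure_preserving: "measure_preserving_map M \<tau>"
    and borel_measurable_C: "C \<in> borel_measurable M"
    and unitary_C: "\<forall>\<omega>\<in>space M. unitary2 (C \<omega>)"
    and AE_ca_nonzero: "AE \<omega> in M. ca (C \<omega>) \<noteq> 0"
    and nn_integral_ln_inv_ca_finite: "(\<integral>\<^sup>+\<omega>. ennreal (ln (1 / cmod (ca (C \<omega>)))) \<partial>M) < \<infinity>"
begin

definition ln_inv_ca :: "'a \<Rightarrow> real" where
  "ln_inv_ca \<omega> = ln (1 / cmod (ca (C \<omega>)))"

definition ln_inv_ca_sum :: "nat \<Rightarrow> 'a \<Rightarrow> real" where
  "ln_inv_ca_sum n \<omega> = (\<Sum>k<n. ln_inv_ca ((\<tau> ^^ k) \<omega>))"

abbreviation ln_inv_ca_mean :: real where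
  "ln_inv_ca_mean \<equiv> \<integral>\<omega>. ln_inv_ca \<omega> \<partial>M"

definition ln_norm :: "nat \<Rightarrow> 'a \<Rightarrow> complex \<Rightarrow> real" where
  "ln_norm n \<omega> z = ln (opnorm (transfer_n C \<tau> n \<omega> z))"

lemma measure_preserving_funpow: "measure_preserving_map M (\<tau> ^^ k)"
  by (rule measure_preserving_map_funpow[OF measure_preserving])

lemma integrable_comp_funpow:
  fixes f :: "'a \<Rightarrow> real"
  shows "integrable M f \<Longrightarrow> integrable M (\<lambda>\<omega>. f ((\<tau> ^^ k) \<omega>))"
  by (rule integrable_comp_measure_preserving[OF measure_preserving_funpow])

lemma integral_comp_funpow:
  fixes f :: "'a \<Rightarrow> real"
  shows "f \<in> borel_measurable M \<Longrightarrow> (\<integral>\<omega>. f ((\<tau> ^^ k) \<omega>) \<partial>M) = (\<integral>\<omega>. f \<omega> \<partial>M)"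
  by (rule integral_comp_measure_preserving[OF measure_preserving_funpow])

lemma AE_nondegenerate: "AE \<omega> in M. \<forall>n. nondegenerate_upto C \<tau> n \<omega>"
proof -
  have "AE \<omega> in M. \<forall>k. unitary2 (C ((\<tau> ^^ k) \<omega>)) \<and> ca (C ((\<tau> ^^ k) \<omega>)) \<noteq> 0"
  proof (subst AE_all_countable, intro allI AE_conjI)
    fix k
    show "AE \<omega> in M. unitary2 (C ((\<tau> ^^ k) \<omega>))"
      using unitary_C measurable_space[OF measurable_measure_preserving[OF measure_preserving_funpow]]
      by (intro AE_I2) auto
    show "AE \<omega> in M. ca (C ((\<tau> ^^ k) \<omega>)) \<noteq> 0"
      using AE_comp_measure_preserving[OF measure_preserving_funpow AE_ca_nonzero] .
  qed
  then show ?thesis by eventually_elim (auto simp: nondegenerate_upto_def)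
qed

lemma borel_measurable_ln_inv_ca: "ln_inv_ca \<in> borel_measurable M"
  unfolding ln_inv_ca_def ca_def using borel_measurable_vec_nth[OF borel_measurable_vec_nth[OF borel_measurable_C]]
  by measurable

lemma AE_ln_inv_ca_nonneg: "AE \<omega> in M. 0 \<le> ln_inv_ca \<omega>"
  using AE_ca_nonzero
proof (rule AE_mp, intro AE_I2 impI)
  fix \<omega> assume "\<omega> \<in> space M" "ca (C \<omega>) \<noteq> 0"
  then have "cmod (ca (C \<omega>)) \<le> 1" "cmod (ca (C \<omega>)) > 0"
    using unitary_C unitary2_norm_ca_le_1 by auto
  then show "0 \<le> ln_inv_ca \<omega>" by (simp add: ln_inv_ca_def ln_div)
qed

lemma integrable_ln_inv_ca: "integrable M ln_inv_ca"
  using nn_integral_ln_inv_ca_finite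
  by (intro integrableI_nonneg[OF borel_measurable_ln_inv_ca AE_ln_inv_ca_nonneg])
     (simp add: ln_inv_ca_def)

lemma integrable_ln_inv_ca_sum: "integrable M (ln_inv_ca_sum n)"
  unfolding ln_inv_ca_sum_def
  by (intro Bochner_Integration.integrable_sum integrable_comp_funpow integrable_ln_inv_ca)

lemma integral_ln_inv_ca_sum: "(\<integral>\<omega>. ln_inv_ca_sum n \<omega> \<partial>M) = real n * ln_inv_ca_mean"
proof -
  have "(\<integral>\<omega>. ln_inv_ca_sum n \<omega> \<partial>M) = (\<Sum>k<n. \<integral>\<omega>. ln_inv_ca ((\<tau> ^^ k) \<omega>) \<partial>M)"
    unfolding ln_inv_ca_sum_def
    by (intro Bochner_Integration.integral_sum integrable_comp_funpow integrable_ln_inv_ca)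
  also have "\<dots> = (\<Sum>k<n. ln_inv_ca_mean)"
    using integral_comp_funpow[OF borel_measurable_ln_inv_ca] by simp
  finally show ?thesis by simp
qed

lemma ln_norm_transfer_n_11:
  assumes nd: "nondegenerate_upto C \<tau> n \<omega>" and z: "cmod z = 1"
  shows "ln (cmod (transfer_n C \<tau> n \<omega> z $ 1 $ 1))
    = ln (cmod (numerator_column C \<tau> n \<omega> z $ 1)) + ln_inv_ca_sum n \<omega>"
proof -
  have a_pos: "\<And>k. k < n \<Longrightarrow> cmod (ca (C ((\<tau> ^^ k) \<omega>))) > 0"
    using nd by (simp add: nondegenerate_upto_def)
  have q_pos: "cmod (numerator_column C \<tau> n \<omega> z $ 1) > 0"
    using numerator_column_1_nonzero[OF nd] z by simp
  have "transfer_n C \<tau> n \<omega> z $ 1 $ 1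
      = numerator_column C \<tau> n \<omega> z $ 1 / (z ^ n * (\<Prod>k<n. ca (C ((\<tau> ^^ k) \<omega>))))"
    using z by (intro transfer_n_first_column) auto
  then have "cmod (transfer_n C \<tau> n \<omega> z $ 1 $ 1)
      = cmod (numerator_column C \<tau> n \<omega> z $ 1) / (\<Prod>k<n. cmod (ca (C ((\<tau> ^^ k) \<omega>))))"
    using z by (simp add: norm_divide norm_mult norm_power prod_norm)
  then have "ln (cmod (transfer_n C \<tau> n \<omega> z $ 1 $ 1)) = ln (cmod (numerator_column C \<tau> n \<omega> z $ 1))
      - ln (\<Prod>k<n. cmod (ca (C ((\<tau> ^^ k) \<omega>))))"
    using q_pos a_pos by (simp add: ln_div prod_pos)
  also have "ln (\<Prod>k<n. cmod (ca (C ((\<tau> ^^ k) \<omega>))))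
      = (\<Sum>k<n. ln (cmod (ca (C ((\<tau> ^^ k) \<omega>)))))"
    using a_pos by (intro ln_prod) auto
  finally show ?thesis
    by (simp add: ln_inv_ca_sum_def ln_inv_ca_def divide_inverse ln_inverse sum_negf)
qed

lemma ln_norm_bounds:
  assumes nd: "nondegenerate_upto C \<tau> n \<omega>" and z: "cmod z = 1"
  shows "ln (cmod (numerator_column C \<tau> n \<omega> z $ 1)) + ln_inv_ca_sum n \<omega> \<le> ln_norm n \<omega> z"
    and "ln_norm n \<omega> z \<le> ln 4 + ln (cmod (numerator_column C \<tau> n \<omega> z $ 1)) + ln_inv_ca_sum n \<omega>"
    and "0 \<le> ln_norm n \<omega> z"
proof -
  define T where "T = transfer_n C \<tau> n \<omega> z"
  have pu: "pseudo_unitary T" unfolding T_def using nd z by (rule transfer_n_pseudo_unitary)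
  have T11: "1 \<le> cmod (T $ 1 $ 1)" by (rule pseudo_unitary_norm_entries(4)[OF pu])
  then have T11_pos: "0 < cmod (T $ 1 $ 1)" by linarith
  have "ln (cmod (T $ 1 $ 1)) \<le> ln (opnorm T)"
    using T11_pos norm_nth_nth_le_opnorm[of T 1 1] by (rule ln_mono[rotated])
  then show "ln (cmod (numerator_column C \<tau> n \<omega> z $ 1)) + ln_inv_ca_sum n \<omega> \<le> ln_norm n \<omega> z"
    using ln_norm_transfer_n_11[OF nd z] by (simp add: ln_norm_def T_def)
  have "ln (opnorm T) \<le> ln (4 * cmod (T $ 1 $ 1))"
    using pseudo_unitary_opnorm_le[OF pu] pseudo_unitary_opnorm_ge_1[OF pu] by (intro ln_mono) linarith+
  also have "\<dots> = ln 4 + ln (cmod (T $ 1 $ 1))" using T11_pos by (simp add: ln_mult)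
  finally show "ln_norm n \<omega> z \<le> ln 4 + ln (cmod (numerator_column C \<tau> n \<omega> z $ 1)) + ln_inv_ca_sum n \<omega>"
    using ln_norm_transfer_n_11[OF nd z] by (simp add: ln_norm_def T_def)
  show "0 \<le> ln_norm n \<omega> z"
    using pseudo_unitary_opnorm_ge_1[OF pu] by (simp add: ln_norm_def T_def)
qed

lemma ln_norm_subadditive:
  assumes nd: "nondegenerate_upto C \<tau> (m + n) \<omega>" and z: "cmod z = 1"
  shows "ln_norm (m + n) \<omega> z \<le> ln_norm m ((\<tau> ^^ n) \<omega>) z + ln_norm n \<omega> z"
proof -
  define A B where "A = transfer_n C \<tau> m ((\<tau> ^^ n) \<omega>) z" "B = transfer_n C \<tau> n \<omega> z"
  have "1 \<le> opnorm A" "1 \<le> opnorm B" "1 \<le> opnorm (A ** B)"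
    using nondegenerate_upto_add[OF nd] nd z unfolding A_B_def transfer_n_add[symmetric]
    by (auto intro!: pseudo_unitary_opnorm_ge_1 transfer_n_pseudo_unitary)
  then have "ln (opnorm (A ** B)) \<le> ln (opnorm A * opnorm B)"
    using opnorm_matrix_mult_le[of A B] by simp
  then show ?thesis using \<open>1 \<le> opnorm A\<close> \<open>1 \<le> opnorm B\<close>
    by (simp add: ln_norm_def transfer_n_add ln_mult flip: A_B_def)
qed

lemma ln_norm_le_ln_inv_ca_sum:
  assumes "nondegenerate_upto C \<tau> n \<omega>" and z: "cmod z = 1"
  shows "ln_norm n \<omega> z \<le> real n * ln 4 + ln_inv_ca_sum n \<omega>"
  using assms(1)
proof (induction n)
  case 0
  then show ?case by (simp add: ln_norm_def opnorm_mat_1 ln_inv_ca_sum_def)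
next
  case (Suc n)
  have nd: "nondegenerate_upto C \<tau> (1 + n) \<omega>" using Suc.prems by simp
  note nd_split = nondegenerate_upto_add[OF nd]
  have "unitary2 (C ((\<tau> ^^ n) \<omega>))" using nd_split(1) by (simp add: nondegenerate_upto_def)
  then have "cmod (numerator_column C \<tau> 1 ((\<tau> ^^ n) \<omega>) z $ 1) = 1"
    using numerator_column_Suc_nth(1)[of C \<tau> 0 "(\<tau> ^^ n) \<omega>" z]
    by (simp add: unitary2_norm_det norm_mult axis_def)
  then have "ln_norm 1 ((\<tau> ^^ n) \<omega>) z \<le> ln 4 + ln_inv_ca ((\<tau> ^^ n) \<omega>)"
    using ln_norm_bounds(2)[OF nd_split(1) z] by (simp add: ln_inv_ca_sum_def)
  moreover have "ln_norm (Suc n) \<omega> z \<le> ln_norm 1 ((\<tau> ^^ n) \<omega>) z + ln_norm n \<omega> z"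
    using ln_norm_subadditive[OF nd z] by simp
  moreover have "ln_inv_ca_sum (Suc n) \<omega> = ln_inv_ca_sum n \<omega> + ln_inv_ca ((\<tau> ^^ n) \<omega>)"
    by (simp add: ln_inv_ca_sum_def)
  ultimately show ?case using Suc.IH[OF nd_split(2)]
    unfolding of_nat_Suc distrib_right mult_1 by linarith
qed

lemma borel_measurable_ln_norm_comp:
  assumes "g \<in> N \<rightarrow>\<^sub>M M" "h \<in> borel_measurable N"
  shows "(\<lambda>x. ln_norm n (g x) (h x)) \<in> borel_measurable N"
  unfolding ln_norm_def
  using borel_measurable_ln_opnorm_transfer_n[OF borel_measurable_C
      measurable_measure_preserving[OF measure_preserving] assms] .

lemma AE_ln_norm_bounds:
  assumes "cmod z = 1"
  shows "AE \<omega> in M. 0 \<le> ln_norm n \<omega> z \<and> ln_norm n \<omega> z \<le> real n * ln 4 + ln_inv_ca_sum n \<omega>"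
  using AE_nondegenerate
  by eventually_elim (use assms ln_norm_bounds(3) ln_norm_le_ln_inv_ca_sum in blast)

lemma integrable_ln_norm:
  assumes "cmod z = 1"
  shows "integrable M (\<lambda>\<omega>. ln_norm n \<omega> z)"
proof (rule Bochner_Integration.integrable_bound)
  show "integrable M (\<lambda>\<omega>. real n * ln 4 + ln_inv_ca_sum n \<omega>)"
    using integrable_ln_inv_ca_sum by simp
  show "(\<lambda>\<omega>. ln_norm n \<omega> z) \<in> borel_measurable M"
    by (rule borel_measurable_ln_norm_comp) simp_all
  show "AE \<omega> in M. norm (ln_norm n \<omega> z) \<le> norm (real n * ln 4 + ln_inv_ca_sum n \<omega>)"
    using AE_ln_norm_bounds[OF assms, of n] by eventually_elim auto
qed

definition mean_ln_norm :: "nat \<Rightarrow> real \<Rightarrow> real" where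
  "mean_ln_norm n t = (\<integral>\<omega>. ln_norm n \<omega> (cis t) \<partial>M)"

lemma mean_ln_norm_nonneg: "0 \<le> mean_ln_norm n t"
  unfolding mean_ln_norm_def using AE_ln_norm_bounds[of "cis t" n, OF norm_cis]
  by (intro integral_nonneg_AE) (auto elim: eventually_mono)

lemma mean_ln_norm_le: "mean_ln_norm n t \<le> real n * (ln 4 + ln_inv_ca_mean)"
proof -
  have "mean_ln_norm n t \<le> (\<integral>\<omega>. real n * ln 4 + ln_inv_ca_sum n \<omega> \<partial>M)"
    unfolding mean_ln_norm_def
  proof (rule integral_mono_AE)
    show "integrable M (\<lambda>\<omega>. ln_norm n \<omega> (cis t))" by (rule integrable_ln_norm) simp
    show "integrable M (\<lambda>\<omega>. real n * ln 4 + ln_inv_ca_sum n \<omega>)"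
      using integrable_ln_inv_ca_sum by simp
    show "AE \<omega> in M. ln_norm n \<omega> (cis t) \<le> real n * ln 4 + ln_inv_ca_sum n \<omega>"
      using AE_ln_norm_bounds[of "cis t" n, OF norm_cis] by eventually_elim simp
  qed
  also have "\<dots> = real n * ln 4 + real n * ln_inv_ca_mean"
    using integrable_ln_inv_ca_sum by (simp add: integral_ln_inv_ca_sum prob_space)
  finally show ?thesis by (simp add: algebra_simps)
qed

lemma mean_ln_norm_subadditive: "mean_ln_norm (m + n) t \<le> mean_ln_norm m t + mean_ln_norm n t"
proof -
  have shifted: "integrable M (\<lambda>\<omega>. ln_norm m ((\<tau> ^^ n) \<omega>) (cis t))"
    using integrable_comp_funpow[of "\<lambda>\<omega>. ln_norm m \<omega> (cis t)"] integrable_ln_norm by simp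
  have unshifted: "integrable M (\<lambda>\<omega>. ln_norm n \<omega> (cis t))" by (rule integrable_ln_norm) simp
  have "mean_ln_norm (m + n) t \<le> (\<integral>\<omega>. ln_norm m ((\<tau> ^^ n) \<omega>) (cis t) + ln_norm n \<omega> (cis t) \<partial>M)"
    unfolding mean_ln_norm_def
  proof (rule integral_mono_AE)
    show "integrable M (\<lambda>\<omega>. ln_norm (m + n) \<omega> (cis t))" by (rule integrable_ln_norm) simp
    show "integrable M (\<lambda>\<omega>. ln_norm m ((\<tau> ^^ n) \<omega>) (cis t) + ln_norm n \<omega> (cis t))"
      using shifted unshifted by (rule Bochner_Integration.integrable_add)
    show "AE \<omega> in M. ln_norm (m + n) \<omega> (cis t)
        \<le> ln_norm m ((\<tau> ^^ n) \<omega>) (cis t) + ln_norm n \<omega> (cis t)"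
      using AE_nondegenerate by eventually_elim (rule ln_norm_subadditive, simp_all)
  qed
  also have "\<dots> = (\<integral>\<omega>. ln_norm m ((\<tau> ^^ n) \<omega>) (cis t) \<partial>M) + mean_ln_norm n t"
    unfolding mean_ln_norm_def using shifted unshifted by (rule Bochner_Integration.integral_add)
  also have "(\<integral>\<omega>. ln_norm m ((\<tau> ^^ n) \<omega>) (cis t) \<partial>M) = mean_ln_norm m t"
    unfolding mean_ln_norm_def
    by (intro integral_comp_funpow[of "\<lambda>\<omega>. ln_norm m \<omega> (cis t)"] borel_measurable_ln_norm_comp)
       simp_all
  finally show ?thesis .
qed

lemma mean_ln_norm_tendsto_lyapunov:
  "(\<lambda>n. mean_ln_norm n t / real n) \<longlonglongrightarrow> lyapunov M \<tau> C (cis t)"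
proof -
  have "(\<lambda>n. mean_ln_norm n t / real n) \<longlonglongrightarrow> (INF n\<in>{1..}. mean_ln_norm n t / real n)"
    by (intro fekete_subadditive mean_ln_norm_subadditive mean_ln_norm_nonneg)
  moreover have "lyapunov M \<tau> C (cis t) = lim (\<lambda>n. mean_ln_norm n t / real n)"
    by (simp add: lyapunov_def mean_ln_norm_def ln_norm_def)
  ultimately show ?thesis by (simp add: limI)
qed

definition circle_integral_ln_norm :: "nat \<Rightarrow> 'a \<Rightarrow> real" where
  "circle_integral_ln_norm n \<omega> = (LINT t:{0..2*pi}|lborel. ln_norm n \<omega> (cis t))"

text \<open>By Gauss' mean value theorem the polynomial part \<open>ln |q\<^sub>n|\<close> of \<open>ln \<parallel>T\<^sub>n\<parallel>\<close>
  averages to \<open>ln |q\<^sub>n(0)| = 0\<close> over the circle, leaving the Birkhoff sum up to \<open>ln 4\<close>.\<close>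

lemma circle_integral_ln_norm:
  assumes nd: "nondegenerate_upto C \<tau> n \<omega>" and \<omega>: "\<omega> \<in> space M"
  shows "set_integrable lborel {0..2*pi} (\<lambda>t. ln_norm n \<omega> (cis t))"
    and "2 * pi * ln_inv_ca_sum n \<omega> \<le> circle_integral_ln_norm n \<omega>"
    and "circle_integral_ln_norm n \<omega> \<le> 2 * pi * (ln 4 + ln_inv_ca_sum n \<omega>)"
proof -
  define q where "q = (\<lambda>t. ln (cmod (numerator_column C \<tau> n \<omega> (cis t) $ 1)))"
  define S where "S = ln_inv_ca_sum n \<omega>"
  have q: "set_integrable lborel {0..2*pi} q" "(LINT t:{0..2*pi}|lborel. q t) = 0"
    using circle_mean_ln_numerator_column[OF nd] by (simp_all add: q_def)
  have const: "set_integrable lborel {0..2*pi} (\<lambda>_. c)" "(LINT t:{0..2*pi}|lborel. c) = 2 * pi * c"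
    for c :: real
    by (simp_all add: set_integral_const_atLeastAtMost)
  have lower: "q t + S \<le> ln_norm n \<omega> (cis t)" and upper: "ln_norm n \<omega> (cis t) \<le> q t + (ln 4 + S)" for t
    using ln_norm_bounds(1,2)[OF nd, of "cis t"] by (simp_all add: q_def S_def)
  have "0 \<le> ln_norm n \<omega> (cis t)" for t using ln_norm_bounds(3)[OF nd] by simp
  then have bound: "norm (ln_norm n \<omega> (cis t)) \<le> norm (\<bar>q t\<bar> + (ln 4 + \<bar>S\<bar>))" for t
    using upper[of t] by simp
  have "(\<lambda>t. ln_norm n \<omega> (cis t)) \<in> borel_measurable lborel"
    using \<omega> by (intro borel_measurable_ln_norm_comp) auto
  then have meas: "set_borel_measurable lborel {0..2*pi} (\<lambda>t. ln_norm n \<omega> (cis t))"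
    unfolding set_borel_measurable_def by (intro borel_measurable_scaleR) simp_all
  have majorant: "set_integrable lborel {0..2*pi} (\<lambda>t. \<bar>q t\<bar> + (ln 4 + \<bar>S\<bar>))"
    using q(1) const(1) by (intro set_integral_add(1) set_integrable_abs)
  show integrable: "set_integrable lborel {0..2*pi} (\<lambda>t. ln_norm n \<omega> (cis t))"
    using bound by (intro set_integrable_bound[OF majorant meas] AE_I2 impI)
  have "2 * pi * S = (LINT t:{0..2*pi}|lborel. q t + S)"
    using q const by (simp add: set_integral_add(2))
  also have "\<dots> \<le> circle_integral_ln_norm n \<omega>"
    unfolding circle_integral_ln_norm_def using lower q(1) const(1) integrable
    by (intro set_integral_mono set_integral_add(1))
  finally show "2 * pi * ln_inv_ca_sum n \<omega> \<le> circle_integral_ln_norm n \<omega>" by (simp add: S_def)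
  have "circle_integral_ln_norm n \<omega> \<le> (LINT t:{0..2*pi}|lborel. q t + (ln 4 + S))"
    unfolding circle_integral_ln_norm_def using upper q(1) const(1) integrable
    by (intro set_integral_mono set_integral_add(1))
  also have "\<dots> = 2 * pi * (ln 4 + S)"
    using q const by (simp add: set_integral_add(2))
  finally show "circle_integral_ln_norm n \<omega> \<le> 2 * pi * (ln 4 + ln_inv_ca_sum n \<omega>)"
    by (simp add: S_def)
qed

lemma AE_circle_integral_ln_norm:
  "AE \<omega> in M. set_integrable lborel {0..2*pi} (\<lambda>t. ln_norm n \<omega> (cis t))
    \<and> 2 * pi * ln_inv_ca_sum n \<omega> \<le> circle_integral_ln_norm n \<omega>
    \<and> circle_integral_ln_norm n \<omega> \<le> 2 * pi * (ln 4 + ln_inv_ca_sum n \<omega>)"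
  using AE_nondegenerate AE_space by eventually_elim (simp add: circle_integral_ln_norm)

lemma borel_measurable_ln_norm_pair:
  "(\<lambda>p. ln_norm n (fst p) (cis (snd p))) \<in> borel_measurable (M \<Otimes>\<^sub>M lborel)"
  "(\<lambda>p. ln_norm n (snd p) (cis (fst p))) \<in> borel_measurable (lborel \<Otimes>\<^sub>M M)"
  by (intro borel_measurable_ln_norm_comp; measurable)+

lemma integrable_circle_integral_ln_norm: "integrable M (circle_integral_ln_norm n)"
proof (rule Bochner_Integration.integrable_bound)
  show "integrable M (\<lambda>\<omega>. 2 * pi * \<bar>ln_inv_ca_sum n \<omega>\<bar> + 2 * pi * ln 4)"
    using integrable_ln_inv_ca_sum by auto
  have "(\<lambda>(\<omega>, t). indicat_real {0..2*pi} t *\<^sub>R ln_norm n \<omega> (cis t)) \<in> borel_measurable (M \<Otimes>\<^sub>M lborel)"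
    using borel_measurable_ln_norm_pair(1)[of n] by (simp add: split_beta') measurable
  from sigma_finite_measure.borel_measurable_lebesgue_integral[OF sigma_finite_lborel this]
  show "circle_integral_ln_norm n \<in> borel_measurable M"
    unfolding circle_integral_ln_norm_def set_lebesgue_integral_def by simp
  show "AE \<omega> in M. norm (circle_integral_ln_norm n \<omega>)
      \<le> norm (2 * pi * \<bar>ln_inv_ca_sum n \<omega>\<bar> + 2 * pi * ln 4)"
    using AE_circle_integral_ln_norm[of n]
  proof eventually_elim
    case (elim \<omega>)
    define S where "S = ln_inv_ca_sum n \<omega>"
    have "2 * pi * S \<le> 2 * pi * \<bar>S\<bar>" "2 * pi * - S \<le> 2 * pi * \<bar>S\<bar>"
      by (intro mult_left_mono; simp)+
    moreover have "0 \<le> ln (4::real)" "2 * pi * (ln 4 + S) = 2 * pi * ln 4 + 2 * pi * S"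
      by (simp_all add: algebra_simps)
    ultimately have "\<bar>circle_integral_ln_norm n \<omega>\<bar> \<le> 2 * pi * \<bar>S\<bar> + 2 * pi * ln 4"
      using elim unfolding S_def[symmetric] abs_le_iff by linarith
    then show ?case by (simp add: S_def)
  qed
qed

lemma set_integral_mean_ln_norm:
  "(LINT t:{0..2*pi}|lborel. mean_ln_norm n t) = (\<integral>\<omega>. circle_integral_ln_norm n \<omega> \<partial>M)"
proof -
  interpret pair_sigma_finite M lborel
    by (intro pair_sigma_finite.intro sigma_finite_measure sigma_finite_lborel)
  define f where "f = (\<lambda>\<omega> t. indicat_real {0..2*pi} t * ln_norm n \<omega> (cis t))"
  have f_meas: "(\<lambda>(\<omega>, t). f \<omega> t) \<in> borel_measurable (M \<Otimes>\<^sub>M lborel)"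
    unfolding f_def using borel_measurable_ln_norm_pair(1)[of n] by (simp add: split_beta') measurable
  have "integrable (M \<Otimes>\<^sub>M lborel) (\<lambda>(\<omega>, t). f \<omega> t)"
  proof (rule Fubini_integrable[OF f_meas])
    have "AE \<omega> in M. (LINT t|lborel. norm (f \<omega> t)) = circle_integral_ln_norm n \<omega>"
      using AE_nondegenerate
    proof eventually_elim
      case (elim \<omega>)
      then have "norm (f \<omega> t) = indicat_real {0..2*pi} t *\<^sub>R ln_norm n \<omega> (cis t)" for t
        using ln_norm_bounds(3)[of n \<omega> "cis t"] by (simp add: f_def abs_mult)
      then show ?case by (simp add: circle_integral_ln_norm_def set_lebesgue_integral_def)
    qed
    moreover have "(\<lambda>(\<omega>, t). norm (f \<omega> t)) \<in> borel_measurable (M \<Otimes>\<^sub>M lborel)"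
      using measurable_compose[OF f_meas borel_measurable_norm] by (simp add: split_beta')
    then have "(\<lambda>\<omega>. LINT t|lborel. norm (f \<omega> t)) \<in> borel_measurable M"
      by (rule sigma_finite_measure.borel_measurable_lebesgue_integral[OF sigma_finite_lborel])
    ultimately show "integrable M (\<lambda>\<omega>. LINT t|lborel. norm ((\<lambda>(\<omega>, t). f \<omega> t) (\<omega>, t)))"
      using integrable_circle_integral_ln_norm[of n] by (subst integrable_cong_AE) auto
    show "AE \<omega> in M. integrable lborel (\<lambda>t. (\<lambda>(\<omega>, t). f \<omega> t) (\<omega>, t))"
      using AE_circle_integral_ln_norm[of n]
      by eventually_elim (simp add: f_def set_integrable_def mult.commute)
  qed
  from Fubini_integral[OF this]
  have "(LINT t|lborel. LINT \<omega>|M. f \<omega> t) = (LINT \<omega>|M. LINT t|lborel. f \<omega> t)" by simp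
  moreover have "(LINT \<omega>|M. f \<omega> t) = indicat_real {0..2*pi} t * mean_ln_norm n t" for t
    by (simp add: f_def mean_ln_norm_def)
  moreover have "(LINT t|lborel. f \<omega> t) = circle_integral_ln_norm n \<omega>" for \<omega>
    by (simp add: f_def circle_integral_ln_norm_def set_lebesgue_integral_def)
  ultimately show ?thesis by (simp add: set_lebesgue_integral_def)
qed

lemma set_integral_mean_ln_norm_bounds:
  "2 * pi * (real n * ln_inv_ca_mean) \<le> (LINT t:{0..2*pi}|lborel. mean_ln_norm n t)"
  "(LINT t:{0..2*pi}|lborel. mean_ln_norm n t) \<le> 2 * pi * (ln 4 + real n * ln_inv_ca_mean)"
proof -
  have "(\<integral>\<omega>. 2 * pi * ln_inv_ca_sum n \<omega> \<partial>M) \<le> (\<integral>\<omega>. circle_integral_ln_norm n \<omega> \<partial>M)"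
    using integrable_ln_inv_ca_sum integrable_circle_integral_ln_norm AE_circle_integral_ln_norm[of n]
    by (intro integral_mono_AE) (auto elim: eventually_mono)
  then show "2 * pi * (real n * ln_inv_ca_mean) \<le> (LINT t:{0..2*pi}|lborel. mean_ln_norm n t)"
    by (simp add: set_integral_mean_ln_norm integral_ln_inv_ca_sum prob_space)
  have "(\<integral>\<omega>. circle_integral_ln_norm n \<omega> \<partial>M) \<le> (\<integral>\<omega>. 2 * pi * (ln 4 + ln_inv_ca_sum n \<omega>) \<partial>M)"
    using integrable_ln_inv_ca_sum integrable_circle_integral_ln_norm AE_circle_integral_ln_norm[of n]
    by (intro integral_mono_AE) (auto elim: eventually_mono)
  also have "\<dots> = 2 * pi * (ln 4 + real n * ln_inv_ca_mean)"
    using integrable_ln_inv_ca_sum by (simp add: integral_ln_inv_ca_sum prob_space)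
  finally show "(LINT t:{0..2*pi}|lborel. mean_ln_norm n t) \<le> 2 * pi * (ln 4 + real n * ln_inv_ca_mean)"
    by (simp add: set_integral_mean_ln_norm)
qed

lemma borel_measurable_mean_ln_norm: "mean_ln_norm n \<in> borel_measurable lborel"
proof -
  have "(\<lambda>(t, \<omega>). ln_norm n \<omega> (cis t)) \<in> borel_measurable (lborel \<Otimes>\<^sub>M M)"
    using borel_measurable_ln_norm_pair(2)[of n] by (simp add: split_beta')
  from sigma_finite_measure.borel_measurable_lebesgue_integral[OF sigma_finite_measure this]
  show ?thesis by (simp add: mean_ln_norm_def[abs_def])
qed

lemma set_integral_mean_ln_norm_div_tendsto:
  "(\<lambda>m. (LINT t:{0..2*pi}|lborel. mean_ln_norm (Suc m) t) / real (Suc m)) \<longlonglongrightarrow> 2 * pi * ln_inv_ca_mean"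
proof -
  have lower: "2 * pi * ln_inv_ca_mean \<le> (LINT t:{0..2*pi}|lborel. mean_ln_norm (Suc m) t) / real (Suc m)"
    for m
    using set_integral_mean_ln_norm_bounds(1)[of "Suc m"] by (simp add: field_simps)
  have upper: "(LINT t:{0..2*pi}|lborel. mean_ln_norm (Suc m) t) / real (Suc m)
      \<le> 2 * pi * ln 4 / real (Suc m) + 2 * pi * ln_inv_ca_mean" for m
  proof -
    have "(LINT t:{0..2*pi}|lborel. mean_ln_norm (Suc m) t) / real (Suc m)
        \<le> 2 * pi * (ln 4 + real (Suc m) * ln_inv_ca_mean) / real (Suc m)"
      using set_integral_mean_ln_norm_bounds(2)[of "Suc m"] by (rule divide_right_mono) simp
    then show ?thesis by (simp add: field_simps)
  qed
  have "\<forall>\<^sub>F m in sequentially.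
      2 * pi * ln_inv_ca_mean \<le> (LINT t:{0..2*pi}|lborel. mean_ln_norm (Suc m) t) / real (Suc m)"
    by (rule always_eventually) (intro allI lower)
  moreover have "\<forall>\<^sub>F m in sequentially. (LINT t:{0..2*pi}|lborel. mean_ln_norm (Suc m) t) / real (Suc m)
      \<le> 2 * pi * ln 4 / real (Suc m) + 2 * pi * ln_inv_ca_mean"
    by (rule always_eventually) (intro allI upper)
  moreover have "(\<lambda>m. 2 * pi * ln 4 / real (Suc m) + 2 * pi * ln_inv_ca_mean)
      \<longlonglongrightarrow> 2 * pi * ln_inv_ca_mean"
    using tendsto_add[OF LIMSEQ_Suc[OF lim_const_over_n[of "2 * pi * ln 4"]] tendsto_const] by simp
  ultimately show ?thesis by (rule tendsto_sandwich[OF _ _ tendsto_const])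
qed

text \<open>Dominated convergence in \<open>t\<close>, with the constant majorant \<open>ln 4 + \<integral> ln (1/|a|)\<close>
  of \<open>mean_ln_norm n t / n\<close>.\<close>

lemma set_integral_lyapunov:
  "(LINT t:{0..2*pi}|lborel. lyapunov M \<tau> C (cis t)) = 2 * pi * ln_inv_ca_mean"
proof -
  define u where "u m t = indicat_real {0..2*pi} t * (mean_ln_norm (Suc m) t / real (Suc m))" for m t
  define g where "g t = indicat_real {0..2*pi} t * lyapunov M \<tau> C (cis t)" for t
  have u_tendsto: "(\<lambda>m. u m t) \<longlonglongrightarrow> g t" for t
    unfolding u_def g_def
    using LIMSEQ_Suc[OF mean_ln_norm_tendsto_lyapunov[of t]] by (intro tendsto_mult_left) simp
  have u_meas: "u m \<in> borel_measurable lborel" for m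
    unfolding u_def using borel_measurable_mean_ln_norm[of "Suc m"] by measurable
  have u_bound: "\<bar>u m t\<bar> \<le> indicat_real {0..2*pi} t * (ln 4 + ln_inv_ca_mean)" for m t
  proof -
    have "mean_ln_norm (Suc m) t / real (Suc m) \<le> ln 4 + ln_inv_ca_mean"
      using mean_ln_norm_le[of "Suc m" t] by (simp add: field_simps)
    with mean_ln_norm_nonneg[of "Suc m" t] show ?thesis by (auto simp: u_def indicator_def)
  qed
  have g_meas: "g \<in> borel_measurable lborel"
    by (rule borel_measurable_LIMSEQ_real[OF u_tendsto u_meas])
  have majorant: "integrable lborel (\<lambda>t. indicat_real {0..2*pi} t *\<^sub>R (ln 4 + ln_inv_ca_mean))"
    using set_integral_const_atLeastAtMost(1) by (simp add: set_integrable_def)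
  have "(\<lambda>m. LINT t|lborel. u m t) \<longlonglongrightarrow> (LINT t|lborel. g t)"
  proof (rule integral_dominated_convergence[OF g_meas u_meas majorant])
    show "AE t in lborel. (\<lambda>m. u m t) \<longlonglongrightarrow> g t" by (simp add: u_tendsto)
    fix m
    show "AE t in lborel. norm (u m t) \<le> indicat_real {0..2*pi} t *\<^sub>R (ln 4 + ln_inv_ca_mean)"
      using u_bound[of m] by (intro AE_I2) simp
  qed
  moreover have "(LINT t|lborel. u m t)
      = (LINT t:{0..2*pi}|lborel. mean_ln_norm (Suc m) t) / real (Suc m)" for m
  proof -
    have "(LINT t|lborel. u m t)
        = (LINT t|lborel. indicat_real {0..2*pi} t * mean_ln_norm (Suc m) t / real (Suc m))"
      unfolding u_def by simp
    also have "\<dots> = (LINT t|lborel. indicat_real {0..2*pi} t * mean_ln_norm (Suc m) t) / real (Suc m)"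
      by (rule integral_divide_zero)
    finally show ?thesis by (simp add: set_lebesgue_integral_def)
  qed
  ultimately show ?thesis
    using LIMSEQ_unique[OF _ set_integral_mean_ln_norm_div_tendsto]
    by (simp add: g_def set_lebesgue_integral_def)
qed

end

theorem mainTheorem3:
  fixes M :: "'a measure" and \<tau> :: "'a \<Rightarrow> 'a" and C :: "'a \<Rightarrow> complex^2^2"
  assumes erg: "ergodic_system M \<tau>"
    and meas: "C \<in> borel_measurable M"
    and unit: "\<forall>\<omega>\<in>space M. unitary2 (C \<omega>)"
    and a_nz: "AE \<omega> in M. ca (C \<omega>) \<noteq> 0"
    and fin: "(\<integral>\<^sup>+\<omega>. ennreal (ln (1 / cmod (ca (C \<omega>)))) \<partial>M) < \<infinity>"
  shows "(1 / (2 * pi)) * (LINT t:{0..2*pi}|lborel. lyapunov M \<tau> C (cis t))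
           = (\<integral>\<omega>. ln (1 / cmod (ca (C \<omega>))) \<partial>M)"
proof -
  have "prob_space M" "measure_preserving_map M \<tau>"
    using erg by (simp_all add: ergodic_system_def)
  then interpret unitary_cocycle M \<tau> C
    using meas unit a_nz fin by (simp add: unitary_cocycle_def unitary_cocycle_axioms_def)
  show ?thesis using set_integral_lyapunov by (simp add: ln_inv_ca_def)
qed

end
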